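(* Let $u$ be a node and let $tx_i = t_{u,k,l}$ (the $l$-th transaction in the $k$-th block $B_{u,k}$ of $u$'s individual chain) be a transaction that is confirmed by an abstract $A_{u,k'}$ with $k' \geq k$. Then there does not exist a chain of confirmed blocks $\{B'_{u,1}, B'_{u,2}, \ldots, B'_{u,k'}\}$ of node $u$ in which all hashes are correct (i.e. the first element of each $B'_{u,m}$, $m\ge 2$, equals $H(B'_{u,m-1})$) and whose $l$-th transaction of the $k$-th block satisfies $t'_{u,k,l} \neq tx_i$.
   Context: There are $N$ nodes with identities $1,\dots,N$ and a public key infrastructure. $H$ is a hash function assumed unbreakable (collision-resistant), and $Sig_u(X)$ denotes a digital signature of $X$ by node $u$, assumed unforgeable. A transaction is a five-tuple $tx_i=\langle \mathrm{Source}_i, s_i, d_i, a_i, r_i\rangle$ (set of source transactions, sender, receiver, transacted value, remaining value). Each node $u$ keeps an individual chain of blocks $B_{u,1}, B_{u,2},\ldots$, where $B_{u,k}=\{H(B_{u,k-1}), t_{u,k,1}, t_{u,k,2},\ldots\}$ is an ordered set and $t_{u,k,l}$ denotes the $l$-th transaction in $B_{u,k}$, sent by $u$ (the genesis block $B_{u,1}$ has no predecessor hash). The abstract of $B_{u,k}$ is $A_{u,k}=\langle u,k,H(B_{u,k}), Sig_u(u\|k\|H(B_{u,k}))\rangle$. A main chain, maintained by a Byzantine-fault-tolerant consensus protocol, contains abstracts; everything on it is agreed on by all honest nodes and cannot be altered. A block $B_{u,k}$ is confirmed (by $A_{u,k'}$) if (i) an abstract $A_{u,k'}$ with $k'\ge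 k$ is on the main chain, and (ii) every abstract $A_{u,l}$ of node $u$ on the main chain with $l\le k'$ is compliant with its corresponding block (i.e. contains its hash and a correct signature). A transaction $tx_i$ with $s_i=u$, $tx_i\in B_{u,k}$, is confirmed (by $A_{u,k'}$) if $B_{u,k}$ is confirmed by $A_{u,k'}$. *)

theory Defs
  imports Complex_Main
begin

text \<open>Nodes are identified by natural numbers 1..N.\<close>
datatype 'i transaction =
  Tx (tx_sources: "'i set") (tx_sender: nat) (tx_receiver: nat) (tx_amount: real) (tx_remaining: real)

text \<open>A block: the hash of the predecessor block (None for the genesis block) followed by
  the ordered list of transactions.  The l-th transaction (l >= 1) is  txs B ! (l - 1).\<close>
datatype ('h, 'i) block = Block (prev_hash: "'h option") (txs: "'i transaction list")

datatype ('h, 's) abstract = Abstract (abs_node: nat) (abs_index: nat) (abs_hash: 'h) (abs_sig: 's)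

definition compliant ::
  "(('h, 'i) block \<Rightarrow> 'h) \<Rightarrow> (nat \<Rightarrow> nat \<times> nat \<times> 'h \<Rightarrow> 's) \<Rightarrow> ('h, 's) abstract \<Rightarrow> ('h, 'i) block \<Rightarrow> bool"
  where "compliant H Sig A B \<longleftrightarrow>
     abs_hash A = H B \<and> abs_sig A = Sig (abs_node A) (abs_node A, abs_index A, H B)"

definition hashes_correct :: "(('h, 'i) block \<Rightarrow> 'h) \<Rightarrow> (nat \<Rightarrow> ('h, 'i) block) \<Rightarrow> nat \<Rightarrow> bool"
  where "hashes_correct H C n \<longleftrightarrow> (\<forall>m. 2 \<le> m \<and> m \<le> n \<longrightarrow> prev_hash (C m) = Some (H (C (m - 1))))"

definition block_confirmed_by ::
  "(('h, 'i) block \<Rightarrow> 'h) \<Rightarrow> (nat \<Rightarrow> nat \<times> nat \<times> 'h \<Rightarrow> 's) \<Rightarrow> ('h, 's) abstract set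
    \<Rightarrow> nat \<Rightarrow> (nat \<Rightarrow> ('h, 'i) block) \<Rightarrow> nat \<Rightarrow> ('h, 's) abstract \<Rightarrow> bool"
  where "block_confirmed_by H Sig MC u C k A \<longleftrightarrow>
     A \<in> MC \<and> abs_node A = u \<and> k \<le> abs_index A \<and>
     (\<forall>A'\<in>MC. abs_node A' = u \<and> 1 \<le> abs_index A' \<and> abs_index A' \<le> abs_index A
                 \<longrightarrow> compliant H Sig A' (C (abs_index A')))"

definition tx_confirmed_by ::
  "(('h, 'i) block \<Rightarrow> 'h) \<Rightarrow> (nat \<Rightarrow> nat \<times> nat \<times> 'h \<Rightarrow> 's) \<Rightarrow> ('h, 's) abstract set
    \<Rightarrow> nat \<Rightarrow> (nat \<Rightarrow> ('h, 'i) block) \<Rightarrow> nat \<Rightarrow> nat \<Rightarrow> 'i transaction \<Rightarrow> ('h, 's) abstract \<Rightarrow> bool"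
  where "tx_confirmed_by H Sig MC u C k l tx A \<longleftrightarrow>
     tx_sender tx = u \<and> 1 \<le> l \<and> l \<le> length (txs (C k)) \<and> txs (C k) ! (l - 1) = tx \<and>
     block_confirmed_by H Sig MC u C k A"

end

theory Submission
  imports Defs
begin

text \<open>The abstract on the main chain pins down the hash of the k'-th block, so collision
  resistance forces any two confirmed chains to agree on block k'; the hash links then
  propagate this agreement back to every earlier block, in particular to block k.\<close>

lemma hashes_correct_agree_downwards:
  assumes "inj H" "hashes_correct H C n" "hashes_correct H C' n"
    and "C' n = C n" "1 \<le> m" "m \<le> n"
  shows "C' m = C m"
  using \<open>m \<le> n\<close> \<open>1 \<le> m\<close>
proof (induction m rule: inc_induct)
  case base
  show ?case using assms(4) .
next
  case (step m)
  have "prev_hash (C' (Suc m)) = Some (H (C' m))" "prev_hash (C (Suc m)) = Some (H (C m))"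
    using assms(2,3) step.hyps(2) step.prems unfolding hashes_correct_def by force+
  with step.IH step.prems have "H (C' m) = H (C m)" by simp
  with \<open>inj H\<close> show ?case by (simp add: inj_eq)
qed

lemma block_confirmed_by_compliant:
  assumes "block_confirmed_by H Sig MC u C k A"
    and "A' \<in> MC" "abs_node A' = u" "1 \<le> abs_index A'" "abs_index A' \<le> abs_index A"
  shows "abs_hash A' = H (C (abs_index A'))"
  using assms unfolding block_confirmed_by_def compliant_def by blast

lemma confirmed_chains_agree_at_index:
  assumes "inj H"
    and "block_confirmed_by H Sig MC u C k A" "block_confirmed_by H Sig MC u C' k' A'"
    and "1 \<le> abs_index A" "abs_index A \<le> abs_index A'"
  shows "C' (abs_index A) = C (abs_index A)"
proof -
  have A: "A \<in> MC" "abs_node A = u"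
    using assms(2) unfolding block_confirmed_by_def by auto
  have "H (C' (abs_index A)) = H (C (abs_index A))"
    using block_confirmed_by_compliant[OF assms(2) A assms(4) order_refl]
      block_confirmed_by_compliant[OF assms(3) A assms(4,5)] by simp
  with \<open>inj H\<close> show ?thesis by (simp add: inj_eq)
qed

theorem theorem1:
  fixes H :: "('h, 'i) block \<Rightarrow> 'h"
    and Sig :: "nat \<Rightarrow> nat \<times> nat \<times> 'h \<Rightarrow> 's"
    and MC :: "('h, 's) abstract set"
    and C :: "nat \<Rightarrow> ('h, 'i) block"
    and N u k k' l :: nat
    and tx :: "'i transaction"
    and A :: "('h, 's) abstract"
  assumes collision_resistant: "inj H"
    and node: "u \<in> {1..N}"
    and k: "1 \<le> k"
    and chain: "hashes_correct H C k'"
    and idx: "abs_index A = k'"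
    and conf: "tx_confirmed_by H Sig MC u C k l tx A"
  shows "\<not> (\<exists>C' :: nat \<Rightarrow> ('h, 'i) block.
             hashes_correct H C' k' \<and>
             (\<forall>m. 1 \<le> m \<and> m \<le> k' \<longrightarrow> (\<exists>A'. block_confirmed_by H Sig MC u C' m A')) \<and>
             l \<le> length (txs (C' k)) \<and> txs (C' k) ! (l - 1) \<noteq> tx)"
proof
  assume "\<exists>C' :: nat \<Rightarrow> ('h, 'i) block.
             hashes_correct H C' k' \<and>
             (\<forall>m. 1 \<le> m \<and> m \<le> k' \<longrightarrow> (\<exists>A'. block_confirmed_by H Sig MC u C' m A')) \<and>
             l \<le> length (txs (C' k)) \<and> txs (C' k) ! (l - 1) \<noteq> tx"
  then obtain C' where chain': "hashes_correct H C' k'"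
    and conf': "\<forall>m. 1 \<le> m \<and> m \<le> k' \<longrightarrow> (\<exists>A'. block_confirmed_by H Sig MC u C' m A')"
    and differs: "txs (C' k) ! (l - 1) \<noteq> tx" by blast
  have block: "block_confirmed_by H Sig MC u C k A" and tx: "txs (C k) ! (l - 1) = tx"
    using conf unfolding tx_confirmed_by_def by auto
  have "k \<le> k'" using block idx unfolding block_confirmed_by_def by auto
  with k obtain A' where block': "block_confirmed_by H Sig MC u C' k' A'"
    using conf' by (meson order_trans order_refl)
  then have "k' \<le> abs_index A'" unfolding block_confirmed_by_def by simp
  then have "C' k' = C k'"
    using confirmed_chains_agree_at_index[OF collision_resistant block block'] idx k \<open>k \<le> k'\<close>
    by simp
  then have "C' k = C k"
    using hashes_correct_agree_downwards[OF collision_resistant chain chain'] k \<open>k \<le> k'\<close> by blast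
  with differs tx show False by simp
qed

end
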